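(* Let $\{(\mathbf{X}^t,Y^t)\}_{t\in\mathbb{N}}$ be a discrete-time stochastic process with $\mathbf{X}^t\in\mathbb{R}^d$, and let $h^t(\mathbf{x})=\langle \boldsymbol{\beta}^t,\mathbf{x}\rangle$ be a sequence of linear classifiers approximating $P(Y^t\mid\mathbf{X}^t)$, each trained on a dataset $\mathcal{D}^t\sim P(\mathbf{X}^t,Y^t)$. Assume $-k\le \beta^t_i\le k$ and $-k\le X^t_i\le k$ for all $i,t$, for some $k\in\mathbb{R}^+$. Given a realization $\mathbf{x}^t$ and an intervention $\boldsymbol{\theta}$ with $\mathbb{E}[h^t(\hat{\mathbf{x}}^t)]\ge 1/2$, the temporal invalidation rate satisfies, for every $\tau>0$, $$\Delta h(\boldsymbol{\theta};\tau)\le k\sqrt{d}\cdot\left(\mathbb{E}\left[\|\boldsymbol{\beta}^{t+\tau}-\boldsymbol{\beta}^t\|\right]+\mathbb{E}\left[\|\hat{\mathbf{x}}^{t+\tau}-\hat{\mathbf{x}}^t\|\right]\right),$$ where $\|\cdot\|$ is the $\ell_2$-norm and the expectation is over $\mathcal{D}^t\sim P(\mathbf{X}^t,Y^t)$ and the training process.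
   Context: The intervention is a soft intervention $do(\boldsymbol{\theta})=do(\mathbf{X}_{\mathcal{I}}=\mathbf{x}_{\mathcal{I}}+\boldsymbol{\theta})$ on a subset $\mathcal{I}$ of features; $nd(\mathcal{I})$ denotes the non-descendants of the intervened variables. $\hat{\mathbf{x}}^t\sim P^{do(\boldsymbol{\theta})}(\mathbf{X}^t\mid \mathbf{X}^t_{nd(\mathcal{I})}=\mathbf{x}^t_{nd(\mathcal{I})})$ and $\hat{\mathbf{x}}^{t+\tau}\sim P^{do(\boldsymbol{\theta})}(\mathbf{X}^{t+\tau}\mid \mathbf{X}^{t+\tau}_{nd(\mathcal{I})}=\mathbf{x}^{t+\tau}_{nd(\mathcal{I})})$ (interventional distributions). The temporal invalidation rate after lag $\tau>0$ is $\Delta h(\boldsymbol{\theta};\tau)=\mathbb{E}\left[\left|h^{t+\tau}(\hat{\mathbf{x}}^{t+\tau})-h^t(\hat{\mathbf{x}}^t)\right|\right]$. *)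

theory Defs
  imports "HOL-Probability.Probability"
begin

definition lin_clf :: "real^'d \<Rightarrow> real^'d \<Rightarrow> real" where
  "lin_clf beta x = beta \<bullet> x"

text \<open>Temporal invalidation rate Delta h(theta; tau) = E |h^{t+tau}(xhat^{t+tau}) - h^t(xhat^t)|,
  where beta s is the (random) parameter of the classifier at time s and xhat s the (random)
  interventional sample at time s, all on a common probability space M.\<close>
definition temporal_invalidation_rate ::
  "'a measure \<Rightarrow> (nat \<Rightarrow> 'a \<Rightarrow> real^'d) \<Rightarrow> (nat \<Rightarrow> 'a \<Rightarrow> real^'d) \<Rightarrow> nat \<Rightarrow> nat \<Rightarrow> real" where
  "temporal_invalidation_rate M beta xhat t \<tau> =
     (\<integral>\<omega>. \<bar>lin_clf (beta (t + \<tau>) \<omega>) (xhat (t + \<tau>) \<omega>) - lin_clf (beta t \<omega>) (xhat t \<omega>)\<bar> \<partial>M)"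

end

theory Submission
  imports Defs
begin

text \<open>The bound holds pointwise before taking expectations: writing
  \<open>\<beta>' \<bullet> x' - \<beta> \<bullet> x = (\<beta>' - \<beta>) \<bullet> x' + \<beta> \<bullet> (x' - x)\<close>, Cauchy-Schwarz bounds each term by a
  difference norm times the norm of a vector in the cube \<open>[-k, k]^d\<close>, which is at most
  \<open>k \<surd>d\<close>. Integrating the pointwise inequality gives the theorem.\<close>

lemma norm_le_sqrt_CARD_if_abs_nth_le:
  fixes x :: "real^'n"
  assumes "\<And>i. \<bar>x $ i\<bar> \<le> k"
  shows "norm x \<le> k * sqrt (real CARD('n))"
proof -
  have "infnorm x \<le> k"
    unfolding infnorm_Max
    by (subst Max_le_iff) (auto simp: assms Basis_vec_def cart_eq_inner_axis[symmetric])
  moreover have "norm x \<le> sqrt (real DIM(real^'n)) * infnorm x"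
    by (rule norm_le_infnorm)
  ultimately show ?thesis
    by (simp add: mult.commute order_trans mult_left_mono)
qed

lemma abs_inner_diff_le:
  fixes b b' x x' :: "'a::real_inner"
  assumes "norm b \<le> C" and "norm x' \<le> C"
  shows "\<bar>b' \<bullet> x' - b \<bullet> x\<bar> \<le> C * (norm (b' - b) + norm (x' - x))"
proof -
  have "b' \<bullet> x' - b \<bullet> x = (b' - b) \<bullet> x' + b \<bullet> (x' - x)"
    by (simp add: inner_diff_left inner_diff_right)
  moreover have "\<bar>(b' - b) \<bullet> x'\<bar> \<le> norm (b' - b) * C"
    using Cauchy_Schwarz_ineq2[of "b' - b" x'] mult_left_mono[OF assms(2) norm_ge_zero[of "b' - b"]]
    by linarith
  moreover have "\<bar>b \<bullet> (x' - x)\<bar> \<le> C * norm (x' - x)"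
    using Cauchy_Schwarz_ineq2[of b "x' - x"] mult_right_mono[OF assms(1) norm_ge_zero[of "x' - x"]]
    by linarith
  ultimately show ?thesis
    by (simp add: algebra_simps)
qed

lemma (in finite_measure) integrable_norm_diff_if_bounded:
  fixes f g :: "'a \<Rightarrow> 'b::{banach, second_countable_topology}"
  assumes "f \<in> borel_measurable M" and "g \<in> borel_measurable M"
    and "\<And>\<omega>. \<omega> \<in> space M \<Longrightarrow> norm (f \<omega>) \<le> C"
    and "\<And>\<omega>. \<omega> \<in> space M \<Longrightarrow> norm (g \<omega>) \<le> C"
  shows "integrable M (\<lambda>\<omega>. norm (f \<omega> - g \<omega>))"
proof (rule integrable_const_bound[where B = "2 * C"])
  show "AE \<omega> in M. norm (norm (f \<omega> - g \<omega>)) \<le> 2 * C"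
  proof (rule AE_I2)
    fix \<omega> assume "\<omega> \<in> space M"
    then show "norm (norm (f \<omega> - g \<omega>)) \<le> 2 * C"
      using assms(3,4) norm_triangle_ineq4[of "f \<omega>" "g \<omega>"] by fastforce
  qed
  show "(\<lambda>\<omega>. norm (f \<omega> - g \<omega>)) \<in> borel_measurable M"
    using assms(1,2) by measurable
qed

theorem theorem1:
  fixes M :: "'a measure"
    and beta xhat :: "nat \<Rightarrow> 'a \<Rightarrow> real^'d"
    and k :: real and t \<tau> :: nat
  assumes "prob_space M"
    and "k > 0"
    and "\<And>s. beta s \<in> borel_measurable M"
    and "\<And>s. xhat s \<in> borel_measurable M"
    and "\<And>s \<omega> i. \<omega> \<in> space M \<Longrightarrow> - k \<le> beta s \<omega> $ i \<and> beta s \<omega> $ i \<le> k"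
    and "\<And>s \<omega> i. \<omega> \<in> space M \<Longrightarrow> - k \<le> xhat s \<omega> $ i \<and> xhat s \<omega> $ i \<le> k"
    and "(\<integral>\<omega>. lin_clf (beta t \<omega>) (xhat t \<omega>) \<partial>M) \<ge> 1/2"
    and "\<tau> > 0"
  shows "temporal_invalidation_rate M beta xhat t \<tau>
           \<le> k * sqrt (real CARD('d)) *
              ((\<integral>\<omega>. norm (beta (t + \<tau>) \<omega> - beta t \<omega>) \<partial>M)
               + (\<integral>\<omega>. norm (xhat (t + \<tau>) \<omega> - xhat t \<omega>) \<partial>M))"
proof -
  interpret prob_space M by fact
  define C where "C = k * sqrt (real CARD('d))"
  have "C \<ge> 0"
    unfolding C_def using assms(2) by simp
  have beta_bound: "norm (beta s \<omega>) \<le> C" and xhat_bound: "norm (xhat s \<omega>) \<le> C"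
    if "\<omega> \<in> space M" for s \<omega>
    unfolding C_def using assms(5,6) that
    by (auto intro!: norm_le_sqrt_CARD_if_abs_nth_le simp: abs_le_iff minus_le_iff)
  have int_beta: "integrable M (\<lambda>\<omega>. norm (beta (t + \<tau>) \<omega> - beta t \<omega>))"
    and int_xhat: "integrable M (\<lambda>\<omega>. norm (xhat (t + \<tau>) \<omega> - xhat t \<omega>))"
    by (auto intro!: integrable_norm_diff_if_bounded assms(3,4) beta_bound xhat_bound)
  have "temporal_invalidation_rate M beta xhat t \<tau>
        \<le> (\<integral>\<omega>. C * (norm (beta (t + \<tau>) \<omega> - beta t \<omega>) + norm (xhat (t + \<tau>) \<omega> - xhat t \<omega>)) \<partial>M)"
    unfolding temporal_invalidation_rate_def lin_clf_def
    using int_beta int_xhat \<open>C \<ge> 0\<close>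
    by (intro integral_mono' abs_inner_diff_le beta_bound xhat_bound) auto
  also have "\<dots> = C * ((\<integral>\<omega>. norm (beta (t + \<tau>) \<omega> - beta t \<omega>) \<partial>M)
                     + (\<integral>\<omega>. norm (xhat (t + \<tau>) \<omega> - xhat t \<omega>) \<partial>M))"
    using int_beta int_xhat by simp
  finally show ?thesis
    unfolding C_def .
qed

end
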